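(* Let $X\sim\mathcal N(0,\Sigma)$ be an $n$-dimensional Gaussian random vector and $\rho(x)=\max\{0,x\}$ acting entrywise. Then $\mathbb E\|\rho(X)\|_2\ge\sqrt{\operatorname{tr}(\Sigma)/(2\pi)}$. *)

theory Defs
  imports "HOL-Probability.Probability"
begin

text \<open>A random vector X on the probability space M is centred Gaussian with covariance
  matrix Sigma (symmetric, positive semidefinite) iff every linear functional a \<bullet> X is
  normally distributed with mean 0 and variance a \<bullet> (S *v a); variance 0 means the
  functional vanishes almost surely (degenerate Gaussian).\<close>
definition centered_gaussian_vector ::
  "'w measure \<Rightarrow> ('w \<Rightarrow> real^'n) \<Rightarrow> real^'n^'n \<Rightarrow> bool" where
  "centered_gaussian_vector M X S \<longleftrightarrow>
     X \<in> borel_measurable M \<and>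
     transpose S = S \<and>
     (\<forall>a. 0 \<le> a \<bullet> (S *v a)) \<and>
     (\<forall>a. (if a \<bullet> (S *v a) = 0
           then (AE \<omega> in M. a \<bullet> X \<omega> = 0)
           else distributed M lborel (\<lambda>\<omega>. a \<bullet> X \<omega>)
                  (\<lambda>x. ennreal (normal_density 0 (sqrt (a \<bullet> (S *v a))) x))))"

definition relu_vec :: "real^'n \<Rightarrow> real^'n" where
  "relu_vec x = (\<chi> i. max 0 (x $ i))"

end

theory Submission
  imports Defs
begin

text \<open>The Euclidean norm is convex, so Jensen's inequality for the Bochner integral gives
  \<open>E \<parallel>\<rho>(X)\<parallel> \<ge> \<parallel>E \<rho>(X)\<parallel>\<close>. Each coordinate \<open>X\<^sub>i\<close> is \<open>N(0, \<Sigma>\<^sub>i\<^sub>i)\<close>, whose positive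
  part has mean \<open>\<surd>(\<Sigma>\<^sub>i\<^sub>i / (2\<pi>))\<close>; the norm of this vector of means is \<open>\<surd>(tr \<Sigma> / (2\<pi>))\<close>.\<close>

lemma has_bochner_integral_vec_lambda:
  fixes f :: "'a \<Rightarrow> 'n::finite \<Rightarrow> real"
  assumes "\<And>i. has_bochner_integral M (\<lambda>x. f x i) (I i)"
  shows "has_bochner_integral M (\<lambda>x. \<chi> i. f x i) (\<chi> i. I i)"
proof -
  have vec_lambda_eq: "(\<chi> i. v i) = (\<Sum>i\<in>UNIV. v i *\<^sub>R axis i 1)" for v :: "'n \<Rightarrow> real"
    using basis_expansion[of "\<chi> i. v i"] by (simp add: scalar_mult_eq_scaleR)
  show ?thesis
    unfolding vec_lambda_eq
    using assms by (intro has_bochner_integral_sum has_bochner_integral_scaleR_left) auto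
qed

lemma normal_moment_positive_part:
  assumes "0 < \<sigma>"
  shows "has_bochner_integral lborel (\<lambda>x. normal_density 0 \<sigma> x * max 0 x) (\<sigma> / sqrt (2 * pi))"
proof -
  \<comment> \<open>\<open>max 0 x = (x + \<bar>x\<bar>) / 2\<close>, in the shape of \<open>normal_moment_nz_1\<close> and
    \<open>normal_moment_abs_odd\<close> with \<open>\<mu> = 0\<close> and \<open>k = 0\<close>\<close>
  have "max 0 x = (x + \<bar>x - 0\<bar> ^ (2 * 0 + 1)) / 2" for x :: real
    by (simp add: max_def)
  then have "has_bochner_integral lborel (\<lambda>x. normal_density 0 \<sigma> x * max 0 x)
      ((0 + 2 ^ 0 * \<sigma> ^ (2 * 0 + 1) * fact 0 * sqrt (2 / pi)) / 2)"
    using assms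
    by (simp only: distrib_left times_divide_eq_right)
       (intro has_bochner_integral_divide_zero has_bochner_integral_add
         normal_moment_nz_1 normal_moment_abs_odd)
  moreover have "\<sigma> * sqrt (2 / pi) / 2 = \<sigma> / sqrt (2 * pi)"
    by (simp add: real_sqrt_divide real_sqrt_mult field_simps)
  ultimately show ?thesis by simp
qed

lemma distributed_normal_has_bochner_integral_positive_part:
  assumes Y: "distributed M lborel Y (\<lambda>x. ennreal (normal_density 0 \<sigma> x))" and "0 < \<sigma>"
  shows "has_bochner_integral M (\<lambda>\<omega>. max 0 (Y \<omega>)) (\<sigma> / sqrt (2 * pi))"
proof -
  note density = normal_moment_positive_part[OF \<open>0 < \<sigma>\<close>]
  have "integrable M (\<lambda>\<omega>. max 0 (Y \<omega>))"
    using distributed_integrable[OF Y, of "max 0"] integrable.intros[OF density] by simp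
  moreover have "(\<integral>\<omega>. max 0 (Y \<omega>) \<partial>M) = \<sigma> / sqrt (2 * pi)"
    using distributed_integral[OF Y, of "max 0"] has_bochner_integral_integral_eq[OF density] by simp
  ultimately show ?thesis
    by (simp add: has_bochner_integral_iff)
qed

lemma inner_axis_matrix_vector_axis:
  fixes S :: "real^'n^'n"
  shows "axis i 1 \<bullet> (S *v axis i 1) = S $ i $ i"
proof -
  have "axis i 1 \<bullet> (S *v axis i 1) = (S *v axis i 1) $ i" by (simp add: inner_axis')
  also have "\<dots> = S $ i $ i"
    by (simp add: matrix_vector_mult_def axis_def if_distrib cong: if_cong)
  finally show ?thesis .
qed

lemma norm_vec_sqrt_diag:
  fixes S :: "real^'n^'n"
  assumes "\<And>i. 0 \<le> S $ i $ i" and "0 \<le> c"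
  shows "norm (\<chi> i. sqrt (S $ i $ i / c)) = sqrt (trace S / c)"
  using assms by (simp add: norm_eq_sqrt_inner inner_vec_def trace_def sum_divide_distrib)

lemma centered_gaussian_vector_measurable:
  "centered_gaussian_vector M X S \<Longrightarrow> X \<in> borel_measurable M"
  by (simp add: centered_gaussian_vector_def)

lemma centered_gaussian_vector_diag_nonneg:
  assumes "centered_gaussian_vector M X S"
  shows "0 \<le> S $ i $ i"
  using assms inner_axis_matrix_vector_axis[of i S]
  unfolding centered_gaussian_vector_def by metis

lemma centered_gaussian_vector_component:
  fixes X :: "'w \<Rightarrow> real^'n"
  assumes "centered_gaussian_vector M X S"
  shows "if S $ i $ i = 0 then (AE \<omega> in M. X \<omega> $ i = 0)
         else distributed M lborel (\<lambda>\<omega>. X \<omega> $ i)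
                (\<lambda>x. ennreal (normal_density 0 (sqrt (S $ i $ i)) x))"
proof -
  have coordinate: "axis i 1 \<bullet> x = x $ i" for x :: "real^'n"
    by (simp add: inner_axis')
  have "if axis i 1 \<bullet> (S *v axis i 1) = 0 then (AE \<omega> in M. axis i 1 \<bullet> X \<omega> = 0)
         else distributed M lborel (\<lambda>\<omega>. axis i 1 \<bullet> X \<omega>)
                (\<lambda>x. ennreal (normal_density 0 (sqrt (axis i 1 \<bullet> (S *v axis i 1))) x))"
    using assms unfolding centered_gaussian_vector_def by blast
  then show ?thesis
    by (simp only: inner_axis_matrix_vector_axis coordinate)
qed

lemma centered_gaussian_vector_has_expectation_relu_component:
  fixes X :: "'w \<Rightarrow> real^'n"
  assumes X: "centered_gaussian_vector M X S"
  shows "has_bochner_integral M (\<lambda>\<omega>. max 0 (X \<omega> $ i)) (sqrt (S $ i $ i / (2 * pi)))"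
proof (cases "S $ i $ i = 0")
  case True
  have "AE \<omega> in M. X \<omega> $ i = 0"
    using centered_gaussian_vector_component[OF X, of i] True by simp
  then have "AE \<omega> in M. max 0 (X \<omega> $ i) = 0"
    by (rule eventually_mono) simp
  moreover have "(\<lambda>\<omega>. max 0 (X \<omega> $ i)) \<in> borel_measurable M"
    using centered_gaussian_vector_measurable[OF X]
    by (intro borel_measurable_max borel_measurable_const measurable_compose[OF _ borel_measurable_nth])
  ultimately have "has_bochner_integral M (\<lambda>\<omega>. max 0 (X \<omega> $ i)) 0"
    using has_bochner_integral_zero by (subst has_bochner_integral_cong_AE) simp_all
  with True show ?thesis
    by simp
next
  case False
  then have "0 < sqrt (S $ i $ i)"
    using centered_gaussian_vector_diag_nonneg[OF X, of i] by simp
  moreover have "distributed M lborel (\<lambda>\<omega>. X \<omega> $ i)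
      (\<lambda>x. ennreal (normal_density 0 (sqrt (S $ i $ i)) x))"
    using centered_gaussian_vector_component[OF X, of i] False by simp
  ultimately have "has_bochner_integral M (\<lambda>\<omega>. max 0 (X \<omega> $ i)) (sqrt (S $ i $ i) / sqrt (2 * pi))"
    by (rule distributed_normal_has_bochner_integral_positive_part[rotated])
  then show ?thesis
    by (simp add: real_sqrt_divide)
qed

lemma centered_gaussian_vector_has_expectation_relu:
  assumes "centered_gaussian_vector M X S"
  shows "has_bochner_integral M (\<lambda>\<omega>. relu_vec (X \<omega>)) (\<chi> i. sqrt (S $ i $ i / (2 * pi)))"
  unfolding relu_vec_def
  using assms by (intro has_bochner_integral_vec_lambda centered_gaussian_vector_has_expectation_relu_component)

theorem mainTheorem15:
  fixes M :: "'w measure" and X :: "'w \<Rightarrow> real^'n" and S :: "real^'n^'n"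
  assumes "prob_space M"
    and "centered_gaussian_vector M X S"
  shows "prob_space.expectation M (\<lambda>\<omega>. norm (relu_vec (X \<omega>))) \<ge> sqrt (trace S / (2 * pi))"
proof -
  have "sqrt (trace S / (2 * pi)) = norm (\<chi> i. sqrt (S $ i $ i / (2 * pi)))"
    using centered_gaussian_vector_diag_nonneg[OF assms(2)] by (simp add: norm_vec_sqrt_diag)
  also have "\<dots> = norm (\<integral>\<omega>. relu_vec (X \<omega>) \<partial>M)"
    using centered_gaussian_vector_has_expectation_relu[OF assms(2)]
    by (simp add: has_bochner_integral_integral_eq)
  also have "\<dots> \<le> (\<integral>\<omega>. norm (relu_vec (X \<omega>)) \<partial>M)"
    by (rule integral_norm_bound)
  finally show ?thesis .
qed

end
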